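(* If $P$ is a D-product of length $\ell$ over a finite alphabet $A$, then $h({\downarrow}P)\leq\ell+1$ and $h({\downarrow}_<P)\leq\ell+1$.
   Context: A D-product is a regular expression $E_1E_2\cdots E_\ell$ where each $E_i$ is either $B^*$ for some subalphabet $B\subseteq A$ or a single letter $a\in A$; $\ell$ is its length, and $P$ also denotes the language of the expression. $u\sqsubseteq v$ (subword) means $u=a_1\cdots a_n$ with letters $a_i$ and $v=v_0a_1v_1\cdots a_nv_n$; $u\sqsubset v$ means $u\sqsubseteq v$, $u\ne v$. ${\downarrow}L=\{v~|~\exists u\in L: v\sqsubseteq u\}$, ${\downarrow}_<L=\{v~|~\exists u\in L: v\sqsubset u\}$. $u\sim_n v$ iff $u,v$ have the same subwords of length at most $n$; $L$ is $n$-PT if it is a union of $\sim_n$-classes, and $h(L)$ is the least such $n$. *)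

theory Defs
  imports Main "HOL-Library.Sublist"
begin

text \<open>Words over the alphabet are lists of elements of a type; the finite alphabet A is
  the universe of a type of class finite. Subwords are (scattered) subsequences.\<close>

datatype 'a dfactor = StarF "'a set" | LetterF 'a

type_synonym 'a dproduct = "'a dfactor list"

fun factor_lang :: "'a dfactor \<Rightarrow> 'a list set" where
  "factor_lang (StarF B) = {w. set w \<subseteq> B}"
| "factor_lang (LetterF a) = {[a]}"

fun dlang :: "'a dproduct \<Rightarrow> 'a list set" where
  "dlang [] = {[]}"
| "dlang (E # P) = {u @ v | u v. u \<in> factor_lang E \<and> v \<in> dlang P}"

definition down :: "'a list set \<Rightarrow> 'a list set" where
  "down L = {v. \<exists>u\<in>L. subseq v u}"

definition sdown :: "'a list set \<Rightarrow> 'a list set" where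
  "sdown L = {v. \<exists>u\<in>L. strict_subseq v u}"

definition simeq :: "nat \<Rightarrow> 'a list \<Rightarrow> 'a list \<Rightarrow> bool" where
  "simeq n u v \<longleftrightarrow> (\<forall>w. length w \<le> n \<longrightarrow> (subseq w u \<longleftrightarrow> subseq w v))"

text \<open>L is n-PT iff it is a union of \<sim>_n classes, i.e. saturated by \<sim>_n.\<close>
definition nPT :: "nat \<Rightarrow> 'a list set \<Rightarrow> bool" where
  "nPT n L \<longleftrightarrow> (\<forall>u v. simeq n u v \<longrightarrow> (u \<in> L \<longleftrightarrow> v \<in> L))"

definition hPT :: "'a list set \<Rightarrow> nat" where
  "hPT L = (LEAST n. nPT n L)"

end

theory Submission
  imports Defs
begin

text \<open>A language closed under subwords is \<open>n\<close>-PT as soon as every word outside it has a subword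
  of length at most \<open>n\<close> outside it. For \<open>{\<down>}P\<close> such a subword of length \<open>\<ell> + 1\<close> is built
  by peeling off the factors of \<open>P\<close> one at a time: a letter factor \<open>a\<close> and a star factor
  \<open>B\<^sup>*\<close> each consume at most one letter of the obstruction (for \<open>B\<^sup>*\<close>, the first letter outside
  \<open>B\<close>). The strict downward closure \<open>{\<down>}\<^sub><P\<close> is a union of closures \<open>{\<down>}P'\<close> of
  D-products with \<open>|P'| \<le> \<ell>\<close>: it equals \<open>{\<down>}P\<close> if \<open>P\<close> starts with a nonempty star, and
  \<open>{\<down>}Q \<union> a\<cdot>{\<down>}\<^sub><Q\<close> if \<open>P = aQ\<close>.\<close>

lemma nPT_mono: "nPT m L \<Longrightarrow> m \<le> n \<Longrightarrow> nPT n L"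
  unfolding nPT_def simeq_def by (meson order_trans)

lemma nPT_Union: "(\<And>L. L \<in> F \<Longrightarrow> nPT n L) \<Longrightarrow> nPT n (\<Union>F)"
  unfolding nPT_def by blast

lemma hPT_le: "nPT n L \<Longrightarrow> hPT L \<le> n"
  unfolding hPT_def by (rule Least_le)

lemma subseq_Cons_self: "subseq xs (x # xs)"
  by (rule list_emb_Cons) (rule subseq_order.order_refl)

lemma down_subseq_closed: "subseq w v \<Longrightarrow> v \<in> down L \<Longrightarrow> w \<in> down L"
  unfolding down_def using subseq_order.trans by blast

lemma sdown_subset_down: "sdown L \<subseteq> down L"
  unfolding sdown_def down_def strict_subseq_def by auto

lemma nPT_if_short_obstructions:
  assumes closed: "\<And>w v. subseq w v \<Longrightarrow> v \<in> L \<Longrightarrow> w \<in> L"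
    and short: "\<And>v. v \<notin> L \<Longrightarrow> \<exists>w. subseq w v \<and> length w \<le> n \<and> w \<notin> L"
  shows "nPT n L"
proof -
  have "v \<in> L" if "simeq n u v" "u \<in> L" for u v
  proof (rule ccontr)
    assume "v \<notin> L"
    then obtain w where "subseq w v" "length w \<le> n" "w \<notin> L" using short by blast
    with that closed show False unfolding simeq_def by blast
  qed
  moreover have "simeq n u v \<Longrightarrow> simeq n v u" for u v :: "'a list"
    unfolding simeq_def by blast
  ultimately show ?thesis unfolding nPT_def by blast
qed

lemma dlang_nonempty: "dlang P \<noteq> {}"
proof (induction P)
  case (Cons E Q)
  then obtain v where "v \<in> dlang Q" by blast
  moreover have "\<exists>u. u \<in> factor_lang E" by (cases E) (auto intro: exI[of _ "[]"])
  then obtain u where "u \<in> factor_lang E" ..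
  ultimately show ?case by auto
qed simp

lemma Nil_in_down_dlang: "[] \<in> down (dlang P)"
  using dlang_nonempty[of P] unfolding down_def by auto

lemma set_subseq_subset: "subseq xs ys \<Longrightarrow> set xs \<subseteq> set ys"
  by (induction rule: list_emb.induct) auto

lemma down_dlang_StarF:
  "down (dlang (StarF B # Q)) = {x @ v | x v. set x \<subseteq> B \<and> v \<in> down (dlang Q)}"
proof (intro equalityI subsetI)
  fix z assume "z \<in> down (dlang (StarF B # Q))"
  then obtain u w where uw: "set u \<subseteq> B" "w \<in> dlang Q" "subseq z (u @ w)"
    unfolding down_def by auto
  from uw(3) obtain x v where "z = x @ v" "subseq x u" "subseq v w"
    by (rule subseq_appendE)
  with uw show "z \<in> {x @ v | x v. set x \<subseteq> B \<and> v \<in> down (dlang Q)}"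
    unfolding down_def using set_subseq_subset[of x u] by blast
next
  fix z assume "z \<in> {x @ v | x v. set x \<subseteq> B \<and> v \<in> down (dlang Q)}"
  then obtain x v w where "z = x @ v" "set x \<subseteq> B" "w \<in> dlang Q" "subseq v w"
    unfolding down_def by auto
  then show "z \<in> down (dlang (StarF B # Q))"
    unfolding down_def by (auto intro!: bexI[of _ "x @ w"] list_emb_append_mono)
qed

lemma down_image_Cons: "down ((#) a ` L) = down L \<union> (#) a ` down L"
proof (intro equalityI subsetI)
  fix z assume "z \<in> down ((#) a ` L)"
  then obtain w where "w \<in> L" "subseq z (a # w)"
    unfolding down_def by auto
  then show "z \<in> down L \<union> (#) a ` down L"
    unfolding down_def by (cases z) (auto split: if_splits)
next
  fix z assume "z \<in> down L \<union> (#) a ` down L"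
  then show "z \<in> down ((#) a ` L)"
    unfolding down_def by (auto intro: list_emb_Cons)
qed

lemma sdown_image_Cons: "sdown ((#) a ` L) = down L \<union> (#) a ` sdown L"
proof (intro equalityI subsetI)
  fix z assume "z \<in> sdown ((#) a ` L)"
  then obtain w where "w \<in> L" "strict_subseq z (a # w)"
    unfolding sdown_def by auto
  then show "z \<in> down L \<union> (#) a ` sdown L"
    unfolding down_def sdown_def strict_subseq_def by (cases z) (auto split: if_splits)
next
  fix z assume "z \<in> down L \<union> (#) a ` sdown L"
  then show "z \<in> sdown ((#) a ` L)"
  proof
    assume "z \<in> down L"
    then obtain w where "w \<in> L" "subseq z w" unfolding down_def by blast
    moreover have "z \<noteq> a # w" using list_emb_length[OF \<open>subseq z w\<close>] by auto
    ultimately show ?thesis unfolding sdown_def strict_subseq_def by (auto intro: list_emb_Cons)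
  qed (auto simp: sdown_def strict_subseq_def)
qed

lemma sdown_eq_down_if_Cons_closed:
  assumes "\<And>u. u \<in> L \<Longrightarrow> b # u \<in> L"
  shows "sdown L = down L"
proof (intro equalityI subsetI)
  fix v assume "v \<in> down L"
  then obtain u where "u \<in> L" "subseq v u" unfolding down_def by blast
  moreover have "strict_subseq v (b # u)"
    using \<open>subseq v u\<close> list_emb_length[OF \<open>subseq v u\<close>] by (auto simp: strict_subseq_def)
  ultimately show "v \<in> sdown L" using assms unfolding sdown_def by blast
qed (use sdown_subset_down in blast)

lemma dlang_LetterF: "dlang (LetterF a # Q) = (#) a ` dlang Q"
  by auto

lemma dlang_StarF_empty: "dlang (StarF {} # Q) = dlang Q"
  by auto

lemma Cons_in_dlang_StarF:
  assumes "b \<in> B" and "u \<in> dlang (StarF B # Q)"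
  shows "b # u \<in> dlang (StarF B # Q)"
proof -
  obtain x v where "u = x @ v" "set x \<subseteq> B" "v \<in> dlang Q" using assms(2) by auto
  with assms(1) have "b # u = (b # x) @ v \<and> set (b # x) \<subseteq> B \<and> v \<in> dlang Q" by simp
  then show ?thesis by (simp only: dlang.simps factor_lang.simps) blast
qed

lemma down_dlang_LetterF:
  "down (dlang (LetterF a # Q)) = down (dlang Q) \<union> (#) a ` down (dlang Q)"
  unfolding dlang_LetterF by (rule down_image_Cons)

declare dlang.simps(2) [simp del]

lemma in_down_dlang_StarF_iff:
  "z \<in> down (dlang (StarF B # Q)) \<longleftrightarrow> (\<exists>x v. z = x @ v \<and> set x \<subseteq> B \<and> v \<in> down (dlang Q))"
  by (simp only: down_dlang_StarF mem_Collect_eq)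

lemma Cons_in_down_dlang_StarF:
  assumes "c \<in> B" and "z \<in> down (dlang (StarF B # Q))"
  shows "c # z \<in> down (dlang (StarF B # Q))"
proof -
  obtain x v where "z = x @ v" "set x \<subseteq> B" "v \<in> down (dlang Q)"
    using assms(2) unfolding in_down_dlang_StarF_iff by blast
  with assms(1) have "c # z = (c # x) @ v \<and> set (c # x) \<subseteq> B \<and> v \<in> down (dlang Q)" by simp
  then show ?thesis unfolding in_down_dlang_StarF_iff by blast
qed

lemma Cons_in_down_dlang_StarF_outside_iff:
  assumes "c \<notin> B"
  shows "c # z \<in> down (dlang (StarF B # Q)) \<longleftrightarrow> c # z \<in> down (dlang Q)"
proof
  assume "c # z \<in> down (dlang (StarF B # Q))"
  then obtain x v where "c # z = x @ v" "set x \<subseteq> B" "v \<in> down (dlang Q)"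
    unfolding in_down_dlang_StarF_iff by blast
  with assms show "c # z \<in> down (dlang Q)" by (cases x) auto
next
  assume "c # z \<in> down (dlang Q)"
  then show "c # z \<in> down (dlang (StarF B # Q))"
    unfolding in_down_dlang_StarF_iff by force
qed

lemma Cons_in_down_dlang_StarF_iff:
  "c # z \<in> down (dlang (StarF B # Q)) \<longleftrightarrow>
    (if c \<in> B then z \<in> down (dlang (StarF B # Q)) else c # z \<in> down (dlang Q))"
  using down_subseq_closed[OF subseq_Cons_self] Cons_in_down_dlang_StarF[of c B z Q]
    Cons_in_down_dlang_StarF_outside_iff[of c B z Q] by auto

lemma Cons_in_down_dlang_LetterF_iff:
  "c # z \<in> down (dlang (LetterF a # Q)) \<longleftrightarrow>
    (if c = a then z \<in> down (dlang Q) else c # z \<in> down (dlang Q))"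
  unfolding down_dlang_LetterF by (auto intro: down_subseq_closed[OF subseq_Cons_self])

text \<open>Keeping the first letter \<open>c\<close> fixed is what lets the induction over the factors go
  through.\<close>
definition short_tail_obstructions :: "nat \<Rightarrow> 'a list set \<Rightarrow> bool" where
  "short_tail_obstructions n L \<longleftrightarrow>
    (\<forall>c y. c # y \<notin> L \<longrightarrow> (\<exists>w. subseq w y \<and> length w \<le> n \<and> c # w \<notin> L))"

lemma short_tail_obstructions_down_dlang_Nil: "short_tail_obstructions 0 (down (dlang []))"
  unfolding short_tail_obstructions_def down_def by simp

lemma short_tail_obstructions_LetterF:
  assumes Q: "short_tail_obstructions n (down (dlang Q))"
  shows "short_tail_obstructions (Suc n) (down (dlang (LetterF a # Q)))"
  unfolding short_tail_obstructions_def
proof (intro allI impI)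
  fix c y assume cy: "c # y \<notin> down (dlang (LetterF a # Q))"
  show "\<exists>w. subseq w y \<and> length w \<le> Suc n \<and> c # w \<notin> down (dlang (LetterF a # Q))"
  proof (cases "c = a")
    case True
    with cy have "y \<notin> down (dlang Q)" by (simp add: Cons_in_down_dlang_LetterF_iff)
    moreover from this obtain d y' where "y = d # y'"
      using Nil_in_down_dlang by (cases y) auto
    ultimately obtain w where "subseq w y'" "length w \<le> n" "d # w \<notin> down (dlang Q)"
      using Q unfolding short_tail_obstructions_def by blast
    with True \<open>y = d # y'\<close> show ?thesis
      by (intro exI[of _ "d # w"]) (simp add: Cons_in_down_dlang_LetterF_iff)
  next
    case False
    with cy have "c # y \<notin> down (dlang Q)" by (simp add: Cons_in_down_dlang_LetterF_iff)
    then obtain w where "subseq w y" "length w \<le> n" "c # w \<notin> down (dlang Q)"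
      using Q unfolding short_tail_obstructions_def by blast
    with False show ?thesis by (auto simp: Cons_in_down_dlang_LetterF_iff)
  qed
qed

lemma notin_down_dlang_StarF_short_subseq:
  assumes Q: "short_tail_obstructions n (down (dlang Q))"
    and "y \<notin> down (dlang (StarF B # Q))"
  shows "\<exists>w. subseq w y \<and> length w \<le> Suc n \<and> w \<notin> down (dlang (StarF B # Q))"
  using assms(2)
proof (induction y)
  case Nil
  then show ?case using Nil_in_down_dlang by blast
next
  case (Cons d y)
  show ?case
  proof (cases "d \<in> B")
    case True
    with Cons.prems have "y \<notin> down (dlang (StarF B # Q))"
      by (simp add: Cons_in_down_dlang_StarF_iff)
    with Cons.IH show ?thesis by (meson list_emb_Cons)
  next
    case False
    with Cons.prems have "d # y \<notin> down (dlang Q)"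
      by (simp add: Cons_in_down_dlang_StarF_iff)
    then obtain w where "subseq w y" "length w \<le> n" "d # w \<notin> down (dlang Q)"
      using Q unfolding short_tail_obstructions_def by blast
    with False show ?thesis
      by (intro exI[of _ "d # w"]) (simp add: Cons_in_down_dlang_StarF_iff)
  qed
qed

lemma short_tail_obstructions_StarF:
  assumes Q: "short_tail_obstructions n (down (dlang Q))"
  shows "short_tail_obstructions (Suc n) (down (dlang (StarF B # Q)))"
  unfolding short_tail_obstructions_def
proof (intro allI impI)
  fix c y assume cy: "c # y \<notin> down (dlang (StarF B # Q))"
  show "\<exists>w. subseq w y \<and> length w \<le> Suc n \<and> c # w \<notin> down (dlang (StarF B # Q))"
  proof (cases "c \<in> B")
    case True
    with cy have "y \<notin> down (dlang (StarF B # Q))" by (simp add: Cons_in_down_dlang_StarF_iff)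
    with True show ?thesis
      using notin_down_dlang_StarF_short_subseq[OF Q] by (auto simp: Cons_in_down_dlang_StarF_iff)
  next
    case False
    with cy have "c # y \<notin> down (dlang Q)" by (simp add: Cons_in_down_dlang_StarF_iff)
    then obtain w where "subseq w y" "length w \<le> n" "c # w \<notin> down (dlang Q)"
      using Q unfolding short_tail_obstructions_def by blast
    with False show ?thesis by (auto simp: Cons_in_down_dlang_StarF_iff)
  qed
qed

lemma short_tail_obstructions_down_dlang: "short_tail_obstructions (length P) (down (dlang P))"
proof (induction P)
  case Nil
  then show ?case using short_tail_obstructions_down_dlang_Nil by simp
next
  case (Cons E Q)
  then show ?case
    by (cases E) (simp_all add: short_tail_obstructions_StarF short_tail_obstructions_LetterF)
qed

lemma nPT_down_dlang: "nPT (length P + 1) (down (dlang P))"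
proof (rule nPT_if_short_obstructions)
  show "w \<in> down (dlang P)" if "subseq w v" "v \<in> down (dlang P)" for w v
    using that by (rule down_subseq_closed)
  show "\<exists>w. subseq w v \<and> length w \<le> length P + 1 \<and> w \<notin> down (dlang P)"
    if v: "v \<notin> down (dlang P)" for v
  proof -
    obtain c y where "v = c # y"
      using v Nil_in_down_dlang[of P] by (cases v) auto
    then obtain w where "subseq w y" "length w \<le> length P" "c # w \<notin> down (dlang P)"
      using v short_tail_obstructions_down_dlang[of P]
      unfolding short_tail_obstructions_def by blast
    with \<open>v = c # y\<close> show ?thesis by (intro exI[of _ "c # w"]) simp
  qed
qed

lemma sdown_dlang_LetterF_Union:
  assumes "sdown (dlang Q) = (\<Union>P'\<in>S. down (dlang P'))"
  shows "sdown (dlang (LetterF a # Q)) =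
    (\<Union>P'\<in>insert Q ((#) (LetterF a) ` S). down (dlang P'))"
proof -
  have "down (dlang P') \<subseteq> down (dlang Q)" if "P' \<in> S" for P'
    using assms sdown_subset_down[of "dlang Q"] that by blast
  then show ?thesis
    unfolding dlang_LetterF sdown_image_Cons assms by (auto simp: down_dlang_LetterF)
qed

lemma sdown_dlang_eq_Union_down_dlang:
  "\<exists>S. (\<forall>P'\<in>S. length P' \<le> length P) \<and> sdown (dlang P) = (\<Union>P'\<in>S. down (dlang P'))"
proof (induction P)
  case Nil
  have "sdown (dlang []) = {}" unfolding sdown_def by (auto simp: strict_subseq_def)
  then show ?case by (intro exI[of _ "{}"]) simp
next
  case (Cons E Q)
  then obtain S where S: "\<forall>P'\<in>S. length P' \<le> length Q"
    "sdown (dlang Q) = (\<Union>P'\<in>S. down (dlang P'))" by blast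
  show ?case
  proof (cases E)
    case (StarF B)
    show ?thesis
    proof (cases "B = {}")
      case True
      with S StarF show ?thesis by (intro exI[of _ S]) (auto simp: dlang_StarF_empty)
    next
      case False
      then obtain b where "b \<in> B" by blast
      then have "sdown (dlang (E # Q)) = down (dlang (E # Q))"
        unfolding StarF by (intro sdown_eq_down_if_Cons_closed Cons_in_dlang_StarF)
      then show ?thesis by (intro exI[of _ "{E # Q}"]) simp
    qed
  next
    case (LetterF a)
    with S show ?thesis
      by (intro exI[of _ "insert Q ((#) (LetterF a) ` S)"]) (auto simp: sdown_dlang_LetterF_Union)
  qed
qed

lemma nPT_sdown_dlang: "nPT (length P + 1) (sdown (dlang P))"
proof -
  obtain S where S: "\<forall>P'\<in>S. length P' \<le> length P"
    "sdown (dlang P) = (\<Union>P'\<in>S. down (dlang P'))"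
    using sdown_dlang_eq_Union_down_dlang[of P] by (elim exE conjE)
  have "nPT (length P + 1) L" if L_in: "L \<in> (\<lambda>P'. down (dlang P')) ` S" for L
  proof -
    obtain P' where "P' \<in> S" "L = down (dlang P')" using L_in by blast
    with S(1) show ?thesis using nPT_mono[OF nPT_down_dlang[of P']] by simp
  qed
  then show ?thesis unfolding S(2) by (rule nPT_Union)
qed

theorem proposition12:
  fixes P :: "('a::finite) dproduct"
  shows "hPT (down (dlang P)) \<le> length P + 1 \<and> hPT (sdown (dlang P)) \<le> length P + 1"
  using hPT_le[OF nPT_down_dlang] hPT_le[OF nPT_sdown_dlang] by (rule conjI)

end
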